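(* Let $(G,k)$ be an instance and $S\subseteq V$ with $|S|\le 4k$. If a large-dense vertex $v$ lies in a connected component of $G-S$ that is a tree, then every feasible solution contains $v$; consequently $(G,k)$ is a yes-instance iff $(G-v,k-1)$ is.
   Context: Graphs are undirected, without self-loops, possibly with multi-edges. $N(v)$ is the set of vertices adjacent to $v$; $\rho(v)$ is the number of unordered pairs $\{u_1,u_2\}\subseteq N(v)$ joined by at least one edge. A vertex $v$ is large-dense if $|N(v)|>7k$ and $\rho(v)> |N(v)|(|N(v)|-1)/4$. A vertex set induces a clique if between any two distinct vertices there is exactly one edge, and a tree if it is connected and acyclic (two parallel edges form a cycle). A feasible solution is $X\subseteq V$, $|X|\le k$, with every component of $G-X$ a clique or a tree. *)

theory Defs
  imports Complex_Main
begin

text \<open>A multigraph: finite vertex set together with a symmetric edge-multiplicity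
  function (number of parallel edges between two vertices), no self-loops.
  All notions below only look at multiplicities between vertices of the vertex set.\<close>

type_synonym 'a mgraph = "'a set \<times> ('a \<Rightarrow> 'a \<Rightarrow> nat)"

definition verts :: "'a mgraph \<Rightarrow> 'a set" where "verts G = fst G"
definition mult :: "'a mgraph \<Rightarrow> 'a \<Rightarrow> 'a \<Rightarrow> nat" where "mult G = snd G"

definition wf_graph :: "'a mgraph \<Rightarrow> bool" where
  "wf_graph G \<longleftrightarrow> finite (verts G) \<and> (\<forall>u w. mult G u w = mult G w u) \<and> (\<forall>u. mult G u u = 0)"

definition adj :: "'a mgraph \<Rightarrow> 'a \<Rightarrow> 'a \<Rightarrow> bool" where
  "adj G u w \<longleftrightarrow> u \<in> verts G \<and> w \<in> verts G \<and> mult G u w > 0"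

definition nbrs :: "'a mgraph \<Rightarrow> 'a \<Rightarrow> 'a set" where
  "nbrs G v = {u. adj G v u}"

definition rho :: "'a mgraph \<Rightarrow> 'a \<Rightarrow> nat" where
  "rho G v = card {{u1, u2} | u1 u2. u1 \<in> nbrs G v \<and> u2 \<in> nbrs G v \<and> u1 \<noteq> u2 \<and> adj G u1 u2}"

definition large_dense :: "'a mgraph \<Rightarrow> nat \<Rightarrow> 'a \<Rightarrow> bool" where
  "large_dense G k v \<longleftrightarrow> card (nbrs G v) > 7 * k \<and>
     real (rho G v) > real (card (nbrs G v)) * (real (card (nbrs G v)) - 1) / 4"

definition del :: "'a mgraph \<Rightarrow> 'a set \<Rightarrow> 'a mgraph" where
  "del G X = (verts G - X, \<lambda>u w. if u \<in> X \<or> w \<in> X then 0 else mult G u w)"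

definition comp :: "'a mgraph \<Rightarrow> 'a \<Rightarrow> 'a set" where
  "comp G v = {u. (adj G)\<^sup>*\<^sup>* v u}"

definition components :: "'a mgraph \<Rightarrow> 'a set set" where
  "components G = {comp G v | v. v \<in> verts G}"

definition induces_clique :: "'a mgraph \<Rightarrow> 'a set \<Rightarrow> bool" where
  "induces_clique G W \<longleftrightarrow> W \<subseteq> verts G \<and> (\<forall>u\<in>W. \<forall>w\<in>W. u \<noteq> w \<longrightarrow> mult G u w = 1)"

definition connected_in :: "'a mgraph \<Rightarrow> 'a set \<Rightarrow> bool" where
  "connected_in G W \<longleftrightarrow> W \<noteq> {} \<and>
     (\<forall>u\<in>W. \<forall>w\<in>W. (\<lambda>a b. adj G a b \<and> a \<in> W \<and> b \<in> W)\<^sup>*\<^sup>* u w)"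

definition has_cycle_in :: "'a mgraph \<Rightarrow> 'a set \<Rightarrow> bool" where
  "has_cycle_in G W \<longleftrightarrow>
     (\<exists>u\<in>W. \<exists>w\<in>W. u \<noteq> w \<and> mult G u w \<ge> 2) \<or>
     (\<exists>cs. length cs \<ge> 3 \<and> distinct cs \<and> set cs \<subseteq> W \<and>
        (\<forall>i < length cs. adj G (cs ! i) (cs ! ((i + 1) mod length cs))))"

definition induces_tree :: "'a mgraph \<Rightarrow> 'a set \<Rightarrow> bool" where
  "induces_tree G W \<longleftrightarrow> W \<subseteq> verts G \<and> connected_in G W \<and> \<not> has_cycle_in G W"

definition feasible :: "'a mgraph \<Rightarrow> nat \<Rightarrow> 'a set \<Rightarrow> bool" where
  "feasible G k X \<longleftrightarrow> X \<subseteq> verts G \<and> card X \<le> k \<and>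
     (\<forall>C \<in> components (del G X). induces_clique (del G X) C \<or> induces_tree (del G X) C)"

definition yes_instance :: "'a mgraph \<Rightarrow> nat \<Rightarrow> bool" where
  "yes_instance G k \<longleftrightarrow> (\<exists>X. feasible G k X)"

end

theory Submission
  imports Defs
begin

text \<open>Let \<open>N = N(v)\<close> and suppose a feasible \<open>X\<close> misses \<open>v\<close>. All of \<open>N - X\<close> lies in the component
  \<open>C\<close> of \<open>v\<close> in \<open>G - X\<close>, and any edge between two vertices of \<open>N - Y\<close> closes a triangle
  through \<open>v\<close> inside the component of \<open>v\<close> in \<open>G - Y\<close>. If \<open>C\<close> is a clique, taking \<open>Y = S\<close>
  shows that \<open>N - X - S\<close> has at most one vertex, so \<open>|N| \<le> 5k + 1\<close>, contradicting \<open>|N| > 7k\<close> and \<open>|N| \<ge> 2\<close>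
  (the latter forced by \<open>\<rho>(v) > 0\<close>).
  If \<open>C\<close> is a tree, taking \<open>Y = X\<close> shows that every edge inside \<open>N\<close> meets \<open>X\<close>, so
  \<open>\<rho>(v) \<le> k (|N| - 1)\<close>, contradicting \<open>\<rho>(v) > |N| (|N| - 1) / 4\<close>. Hence \<open>v\<close> belongs to every
  solution, and solutions of \<open>(G, k)\<close> are exactly those of \<open>(G - v, k - 1)\<close> extended by \<open>v\<close>.\<close>

lemma verts_del [simp]: "verts (del G X) = verts G - X"
  by (simp add: del_def verts_def)

lemma mult_del [simp]: "mult (del G X) u w = (if u \<in> X \<or> w \<in> X then 0 else mult G u w)"
  by (simp add: del_def mult_def)

lemma adj_del: "adj (del G X) a b \<longleftrightarrow> a \<in> verts G - X \<and> b \<in> verts G - X \<and> mult G a b > 0"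
  by (auto simp: adj_def)

lemma del_del: "del (del G A) B = del G (A \<union> B)"
  unfolding del_def verts_def mult_def by (auto intro!: ext)

lemma adj_sym: "wf_graph G \<Longrightarrow> adj G u w \<Longrightarrow> adj G w u"
  by (auto simp: adj_def wf_graph_def)

lemma nbrs_subset_verts: "nbrs G v \<subseteq> verts G"
  by (auto simp: nbrs_def adj_def)

lemma finite_nbrs: "wf_graph G \<Longrightarrow> finite (nbrs G v)"
  using nbrs_subset_verts[of G v] by (meson finite_subset wf_graph_def)

lemma not_in_nbrs: "wf_graph G \<Longrightarrow> v \<notin> nbrs G v"
  by (auto simp: nbrs_def adj_def wf_graph_def)

lemma self_in_comp: "v \<in> comp H v"
  by (simp add: comp_def)

lemma adj_in_comp: "adj H v u \<Longrightarrow> u \<in> comp H v"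
  by (simp add: comp_def)

lemma comp_in_components: "v \<in> verts H \<Longrightarrow> comp H v \<in> components H"
  by (auto simp: components_def)

lemma nbrs_in_comp_del:
  assumes "v \<in> verts G - X" and "u \<in> nbrs G v - X"
  shows "u \<in> comp (del G X) v"
  using assms by (intro adj_in_comp) (auto simp: adj_del nbrs_def adj_def)

lemma triangle_has_cycle:
  assumes "distinct [v, a, b]" and "set [v, a, b] \<subseteq> W"
    and "adj H v a" and "adj H a b" and "adj H b v"
  shows "has_cycle_in H W"
proof -
  have "adj H ([v, a, b] ! i) ([v, a, b] ! ((i + 1) mod 3))" if "i < 3" for i
  proof -
    have "i = 0 \<or> i = 1 \<or> i = 2" using that by auto
    then show ?thesis using assms(3-5) by auto
  qed
  then show ?thesis
    unfolding has_cycle_in_def using assms(1,2) by (intro disjI2 exI[of _ "[v, a, b]"]) auto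
qed

lemma triangle_in_comp_del_has_cycle:
  assumes "wf_graph G" and "v \<in> verts G - Y"
    and "a \<in> nbrs G v - Y" and "b \<in> nbrs G v - Y" and "a \<noteq> b" and "adj G a b"
  shows "has_cycle_in (del G Y) (comp (del G Y) v)"
proof (rule triangle_has_cycle)
  have "adj G v a" "adj G v b" using assms(3,4) by (auto simp: nbrs_def)
  then show "adj (del G Y) v a" "adj (del G Y) a b" "adj (del G Y) b v"
    using assms adj_sym[OF assms(1)] by (auto simp: adj_del adj_def)
  show "distinct [v, a, b]" using assms not_in_nbrs by fastforce
  show "set [v, a, b] \<subseteq> comp (del G Y) v"
    using assms self_in_comp nbrs_in_comp_del by fastforce
qed

lemma feasible_comp_clique_or_tree:
  assumes "feasible G k X" and "v \<in> verts G - X"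
  shows "induces_clique (del G X) (comp (del G X) v) \<or> induces_tree (del G X) (comp (del G X) v)"
  using assms comp_in_components[of v "del G X"] by (auto simp: feasible_def)

lemma clique_comp_del_card_nbrs_le:
  assumes "wf_graph G" and "finite X" and "finite S" and "v \<in> verts G - (X \<union> S)"
    and "induces_clique (del G X) (comp (del G X) v)"
    and "\<not> has_cycle_in (del G S) (comp (del G S) v)"
  shows "card (nbrs G v) \<le> card X + card S + 1"
proof -
  let ?N = "nbrs G v"
  have "a = b" if ab: "a \<in> ?N - X - S" "b \<in> ?N - X - S" for a b
  proof (rule ccontr)
    assume "a \<noteq> b"
    moreover have "a \<in> comp (del G X) v" "b \<in> comp (del G X) v"
      using ab assms(4) nbrs_in_comp_del[of v G X] by auto
    ultimately have "mult (del G X) a b = 1"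
      using assms(5) by (auto simp: induces_clique_def)
    then have "adj G a b" using ab nbrs_subset_verts[of G v] by (auto simp: adj_def split: if_splits)
    then show False
      using triangle_in_comp_del_has_cycle[of G v S a b] assms ab \<open>a \<noteq> b\<close> by auto
  qed
  then have "card (?N - X - S) \<le> 1"
    by (simp add: card_le_Suc0_iff_eq finite_nbrs[OF assms(1)])
  have "card ?N \<le> card (X \<union> S \<union> (?N - X - S))"
    using assms(2,3) finite_nbrs[OF assms(1)] by (intro card_mono) auto
  also have "\<dots> \<le> card X + card S + card (?N - X - S)"
    by (meson add_le_mono card_Un_le le_refl order_trans)
  finally show ?thesis using \<open>card (?N - X - S) \<le> 1\<close> by linarith
qed

lemma card_pairs_meeting_le:
  assumes "finite N"
  shows "card {{a, b} | a b. a \<in> N \<and> b \<in> N \<and> a \<noteq> b \<and> (a \<in> X \<or> b \<in> X)}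
           \<le> card (X \<inter> N) * (card N - 1)"
proof -
  have "{{a, b} | a b. a \<in> N \<and> b \<in> N \<and> a \<noteq> b \<and> (a \<in> X \<or> b \<in> X)}
          \<subseteq> (\<Union>x\<in>X \<inter> N. (\<lambda>u. {x, u}) ` (N - {x}))"
    by (auto simp: insert_commute)
  then have "card {{a, b} | a b. a \<in> N \<and> b \<in> N \<and> a \<noteq> b \<and> (a \<in> X \<or> b \<in> X)}
               \<le> card (\<Union>x\<in>X \<inter> N. (\<lambda>u. {x, u}) ` (N - {x}))"
    using assms by (intro card_mono) auto
  also have "\<dots> \<le> (\<Sum>x\<in>X \<inter> N. card ((\<lambda>u. {x, u}) ` (N - {x})))"
    using assms by (intro card_UN_le) auto
  also have "\<dots> \<le> (\<Sum>x\<in>X \<inter> N. card N - 1)"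
  proof (rule sum_mono)
    fix x assume "x \<in> X \<inter> N"
    then have "card (N - {x}) = card N - 1" using assms by simp
    then show "card ((\<lambda>u. {x, u}) ` (N - {x})) \<le> card N - 1"
      by (metis card_image_le assms finite_Diff)
  qed
  finally show ?thesis by simp
qed

lemma tree_comp_del_rho_le:
  assumes "wf_graph G" and "v \<in> verts G - X"
    and "\<not> has_cycle_in (del G X) (comp (del G X) v)"
  shows "rho G v \<le> card (X \<inter> nbrs G v) * (card (nbrs G v) - 1)"
proof -
  let ?N = "nbrs G v"
  have "a \<in> X \<or> b \<in> X" if "a \<in> ?N" "b \<in> ?N" "a \<noteq> b" "adj G a b" for a b
    using triangle_in_comp_del_has_cycle[of G v X a b] assms that by auto
  then have "{{a, b} | a b. a \<in> ?N \<and> b \<in> ?N \<and> a \<noteq> b \<and> adj G a b}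
               \<subseteq> {{a, b} | a b. a \<in> ?N \<and> b \<in> ?N \<and> a \<noteq> b \<and> (a \<in> X \<or> b \<in> X)}"
    by blast
  then have "rho G v \<le> card {{a, b} | a b. a \<in> ?N \<and> b \<in> ?N \<and> a \<noteq> b \<and> (a \<in> X \<or> b \<in> X)}"
    unfolding rho_def
    by (rule card_mono[rotated]) (auto intro: finite_subset[of _ "Pow ?N"] simp: finite_nbrs[OF assms(1)])
  also have "\<dots> \<le> card (X \<inter> ?N) * (card ?N - 1)"
    using card_pairs_meeting_le[OF finite_nbrs[OF assms(1)]] .
  finally show ?thesis .
qed

lemma large_dense_card_nbrs_ge_2:
  assumes "wf_graph G" and "large_dense G k v"
  shows "2 \<le> card (nbrs G v)"
proof (rule ccontr)
  assume small: "\<not> 2 \<le> card (nbrs G v)"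
  have "rho G v = 0"
  proof -
    have "\<not> (u1 \<in> nbrs G v \<and> u2 \<in> nbrs G v \<and> u1 \<noteq> u2)" for u1 u2
    proof
      assume "u1 \<in> nbrs G v \<and> u2 \<in> nbrs G v \<and> u1 \<noteq> u2"
      then have "card {u1, u2} \<le> card (nbrs G v)"
        by (intro card_mono finite_nbrs[OF assms(1)]) auto
      then show False using small \<open>u1 \<in> nbrs G v \<and> u2 \<in> nbrs G v \<and> u1 \<noteq> u2\<close> by auto
    qed
    then have "{{u1, u2} | u1 u2. u1 \<in> nbrs G v \<and> u2 \<in> nbrs G v \<and> u1 \<noteq> u2 \<and> adj G u1 u2} = {}"
      by blast
    then show ?thesis unfolding rho_def by (simp only: card.empty)
  qed
  moreover have "card (nbrs G v) = 0 \<or> card (nbrs G v) = 1" using small by auto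
  ultimately show False using assms(2) by (auto simp: large_dense_def)
qed

lemma large_dense_rho_gt:
  assumes "wf_graph G" and "large_dense G k v"
  shows "k * (card (nbrs G v) - 1) < rho G v"
proof -
  let ?n = "real (card (nbrs G v))"
  have "?n \<ge> 7 * real k + 1" and "?n \<ge> 2"
    using assms large_dense_card_nbrs_ge_2[OF assms] by (auto simp: large_dense_def)
  then have "4 * real k * (?n - 1) < ?n * (?n - 1)"
    by (intro mult_strict_right_mono) auto
  then have "real k * (?n - 1) < ?n * (?n - 1) / 4"
    by simp
  also have "\<dots> < real (rho G v)"
    using assms(2) by (simp add: large_dense_def)
  finally have "real (k * (card (nbrs G v) - 1)) < real (rho G v)"
    using large_dense_card_nbrs_ge_2[OF assms] by (simp add: of_nat_diff)
  then show ?thesis by (simp only: of_nat_less_iff)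
qed

lemma large_dense_mem_feasible:
  assumes "wf_graph G" and "S \<subseteq> verts G" and "card S \<le> 4 * k"
    and "v \<in> verts G - S" and "large_dense G k v"
    and "\<not> has_cycle_in (del G S) (comp (del G S) v)"
    and "feasible G k X"
  shows "v \<in> X"
proof (rule ccontr)
  assume "v \<notin> X"
  then have v: "v \<in> verts G - X" "v \<in> verts G - (X \<union> S)" using assms(4) by auto
  have "X \<subseteq> verts G" and "card X \<le> k" using assms(7) by (auto simp: feasible_def)
  have "finite X" "finite S"
    using assms(1,2) \<open>X \<subseteq> verts G\<close> finite_subset by (auto simp: wf_graph_def)
  have "7 * k < card (nbrs G v)" using assms(5) by (simp add: large_dense_def)
  from feasible_comp_clique_or_tree[OF assms(7) v(1)] show False
  proof
    assume "induces_clique (del G X) (comp (del G X) v)"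
    then have "card (nbrs G v) \<le> card X + card S + 1"
      using clique_comp_del_card_nbrs_le[OF assms(1) \<open>finite X\<close> \<open>finite S\<close> v(2) _ assms(6)] by simp
    then show False
      using \<open>card X \<le> k\<close> \<open>7 * k < card (nbrs G v)\<close> assms(3)
        large_dense_card_nbrs_ge_2[OF assms(1,5)] by linarith
  next
    assume "induces_tree (del G X) (comp (del G X) v)"
    then have "rho G v \<le> card (X \<inter> nbrs G v) * (card (nbrs G v) - 1)"
      using tree_comp_del_rho_le[OF assms(1) v(1)] by (simp add: induces_tree_def)
    also have "\<dots> \<le> k * (card (nbrs G v) - 1)"
      using \<open>card X \<le> k\<close> card_mono[OF \<open>finite X\<close>, of "X \<inter> nbrs G v"] by simp
    finally show False using large_dense_rho_gt[OF assms(1,5)] by simp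
  qed
qed

lemma feasible_insert_iff_del:
  assumes "finite (verts G)" and "v \<in> verts G" and "v \<notin> Y"
  shows "feasible G (Suc k) (insert v Y) \<longleftrightarrow> feasible (del G {v}) k Y"
proof -
  have del_eq: "del (del G {v}) Y = del G (insert v Y)" by (simp add: del_del)
  have sub: "Y \<subseteq> verts (del G {v}) \<longleftrightarrow> insert v Y \<subseteq> verts G" using assms(2,3) by auto
  have card_insert: "card (insert v Y) = Suc (card Y)" if "insert v Y \<subseteq> verts G"
    using that assms(1,3) finite_subset[of Y "verts G"] by simp
  show ?thesis unfolding feasible_def del_eq sub
    by (intro conj_cong refl) (simp add: card_insert)
qed

lemma yes_instance_iff_del_forced_vertex:
  assumes "finite (verts G)" and "v \<in> verts G" and forced: "\<forall>X. feasible G k X \<longrightarrow> v \<in> X"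
  shows "yes_instance G k \<longleftrightarrow> 1 \<le> k \<and> yes_instance (del G {v}) (k - 1)"
proof
  assume "yes_instance G k"
  then obtain X where X: "feasible G k X" by (auto simp: yes_instance_def)
  then have "v \<in> X" using forced by blast
  have "X \<subseteq> verts G" "card X \<le> k" using X by (auto simp: feasible_def)
  then have "card X \<noteq> 0" using \<open>v \<in> X\<close> finite_subset[OF _ assms(1)] by auto
  then have k: "k = Suc (k - 1)" using \<open>card X \<le> k\<close> by linarith
  have "insert v (X - {v}) = X" using \<open>v \<in> X\<close> by blast
  then have "feasible G (Suc (k - 1)) (insert v (X - {v}))" using X k by simp
  then have "feasible (del G {v}) (k - 1) (X - {v})"
    using feasible_insert_iff_del[OF assms(1,2), of "X - {v}"] by simp
  then show "1 \<le> k \<and> yes_instance (del G {v}) (k - 1)"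
    using k by (auto simp: yes_instance_def)
next
  assume "1 \<le> k \<and> yes_instance (del G {v}) (k - 1)"
  then obtain Y where k: "k = Suc (k - 1)" and Y: "feasible (del G {v}) (k - 1) Y"
    by (auto simp: yes_instance_def)
  then have "v \<notin> Y" by (auto simp: feasible_def)
  then have "feasible G (Suc (k - 1)) (insert v Y)"
    using feasible_insert_iff_del[OF assms(1,2)] Y by simp
  then show "yes_instance G k" using k by (metis yes_instance_def)
qed

theorem mainTheorem10:
  fixes G :: "'a mgraph" and k :: nat and S :: "'a set" and v :: 'a
  assumes "wf_graph G"
    and "S \<subseteq> verts G" and "card S \<le> 4 * k"
    and "v \<in> verts G - S"
    and "large_dense G k v"
    and "induces_tree (del G S) (comp (del G S) v)"
  shows "(\<forall>X. feasible G k X \<longrightarrow> v \<in> X) \<and>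
         (yes_instance G k \<longleftrightarrow> (k \<ge> 1 \<and> yes_instance (del G {v}) (k - 1)))"
proof -
  have "\<not> has_cycle_in (del G S) (comp (del G S) v)"
    using assms(6) by (simp add: induces_tree_def)
  then have forced: "\<forall>X. feasible G k X \<longrightarrow> v \<in> X"
    using large_dense_mem_feasible[OF assms(1-5)] by blast
  have "finite (verts G)" using assms(1) by (simp add: wf_graph_def)
  from yes_instance_iff_del_forced_vertex[OF this DiffD1[OF assms(4)] forced]
  show ?thesis using forced by (intro conjI)
qed

end
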